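(* Let $r\geq 0$ and $n\geq 1$ be integers. For every $l\geq 0$, the $l$-th prolongation $\mathcal{A}^{(l)}$ of $\mathcal{A}^{(0)}=\mathrm{Sym}^{2r-1}H\otimes E$ is isomorphic, as a representation of $\mathbf{Sp}(1)\times\mathbf{Sp}(n)$, to $$\mathcal{A}^{(l)}\;\cong\;\mathrm{Sym}^{2r-l-1}H\otimes\mathrm{Sym}^{l+1}E$$ (in particular $\mathcal{A}^{(l)}=0$ for $l\geq 2r$).
   Context: $H\cong\mathbb{C}^2$ and $E\cong\mathbb{C}^{2n}$ are the standard representations of $\mathbf{Sp}(1)$ and $\mathbf{Sp}(n)$ (with invariant symplectic forms); $\mathrm{Sym}^m=0$ for $m<0$. Let $\sigma:(H\otimes E)\otimes\mathrm{Sym}^{2r}H\to\mathrm{Sym}^{2r+1}H\otimes E$, $\sigma(h\otimes e\otimes\phi)=(h\cdot\phi)\otimes e$, and $\mathcal{A}^{(0)}=\ker\sigma\cong\mathrm{Sym}^{2r-1}H\otimes E$. With $V=H\otimes E$, let $\Delta:\mathrm{Sym}^{l+1}V\to\mathrm{Sym}^lV\otimes V$ be the diagonal map determined by $\frac1{(l+1)!}\xi^{l+1}\mapsto\frac1{l!}\xi^l\otimes\xi$. For $l\geq1$, $\mathcal{A}^{(l)}$ is the kernel of $(\mathrm{id}\otimes\sigma)\circ(\Delta\otimes\mathrm{id}):\mathrm{Sym}^{l+1}(H\otimes E)\otimes\mathrm{Sym}^{2r}H\to\mathrm{Sym}^l(H\otimes E)\otimes\mathrm{Sym}^{2r+1}H\otimes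 E$. *)

theory Defs
  imports "HOL-Analysis.Analysis"
begin

text \<open>Symmetric powers are modelled as homogeneous polynomial functions on the dual
space (written in dual coordinates); tensor products of symmetric powers of two spaces
as bihomogeneous polynomial functions of two vector arguments.\<close>

definition mexp :: "'x set \<Rightarrow> nat \<Rightarrow> ('x \<Rightarrow> nat) set" where
  "mexp X m = {\<alpha>. (\<forall>x. x \<notin> X \<longrightarrow> \<alpha> x = 0) \<and> (\<Sum>x\<in>X. \<alpha> x) = m}"

definition bihom :: "'x set \<Rightarrow> nat \<Rightarrow> 'y set \<Rightarrow> nat
    \<Rightarrow> (('x \<Rightarrow> complex) \<Rightarrow> ('y \<Rightarrow> complex) \<Rightarrow> complex) \<Rightarrow> bool" where
  "bihom X m Y k F \<longleftrightarrow> (\<exists>c. \<forall>v w. F v w =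
     (\<Sum>\<alpha>\<in>mexp X m. \<Sum>\<beta>\<in>mexp Y k.
        c \<alpha> \<beta> * (\<Prod>x\<in>X. v x ^ \<alpha> x) * (\<Prod>y\<in>Y. w y ^ \<beta> y)))"

text \<open>Coordinates: H has indices {0,1}, E has indices {0..<2n}, V = H \<otimes> E has pairs.\<close>
definition Hset :: "nat set" where "Hset = {..<2}"
definition Eset :: "nat \<Rightarrow> nat set" where "Eset n = {..<2*n}"
definition Vset :: "nat \<Rightarrow> (nat \<times> nat) set" where "Vset n = Hset \<times> Eset n"

definition dy :: "nat \<times> nat \<Rightarrow> ((nat \<times> nat \<Rightarrow> complex) \<Rightarrow> (nat \<Rightarrow> complex) \<Rightarrow> complex)
    \<Rightarrow> (nat \<times> nat \<Rightarrow> complex) \<Rightarrow> (nat \<Rightarrow> complex) \<Rightarrow> complex" where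
  "dy p F y u = deriv (\<lambda>t. F (y(p := t)) u) (y p)"

text \<open>The l-th prolongation: kernel of (id \<otimes> sigma) o (Delta \<otimes> id) on
  Sym^(l+1)(H \<otimes> E) \<otimes> Sym^(2r) H. Delta is the gradient in the V-variables,
  sigma multiplies the H-index by the H-variable u.\<close>
definition prolong :: "nat \<Rightarrow> nat \<Rightarrow> nat
    \<Rightarrow> ((nat \<times> nat \<Rightarrow> complex) \<Rightarrow> (nat \<Rightarrow> complex) \<Rightarrow> complex) set" where
  "prolong r n l = {F. bihom (Vset n) (l+1) Hset (2*r) F \<and>
      (\<forall>j<2*n. \<forall>y u. (\<Sum>i<2. u i * dy (i,j) F y u) = 0)}"

text \<open>Sym^(2r-l-1) H \<otimes> Sym^(l+1) E (zero if 2r-l-1 < 0).\<close>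
definition target :: "nat \<Rightarrow> nat \<Rightarrow> nat
    \<Rightarrow> ((nat \<Rightarrow> complex) \<Rightarrow> (nat \<Rightarrow> complex) \<Rightarrow> complex) set" where
  "target r n l = {G. if l + 1 \<le> 2*r then bihom Hset (2*r - l - 1) (Eset n) (l+1) G
                      else G = (\<lambda>_ _. 0)}"

definition omega :: "nat \<Rightarrow> nat \<Rightarrow> nat \<Rightarrow> complex" where
  "omega k a b = (if a < k \<and> b = a + k then 1 else if b < k \<and> a = b + k then -1 else 0)"

text \<open>A (2k x 2k matrix) lies in the compact group Sp(k) = Sp(2k,C) \<inter> U(2k).\<close>
definition Sp :: "nat \<Rightarrow> (nat \<Rightarrow> nat \<Rightarrow> complex) \<Rightarrow> bool" where
  "Sp k A \<longleftrightarrow>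
     (\<forall>i<2*k. \<forall>j<2*k. (\<Sum>a<2*k. \<Sum>b<2*k. A a i * omega k a b * A b j) = omega k i j) \<and>
     (\<forall>i<2*k. \<forall>j<2*k. (\<Sum>a<2*k. cnj (A a i) * A a j) = (if i = j then 1 else 0))"

definition actV :: "nat \<Rightarrow> (nat \<Rightarrow> nat \<Rightarrow> complex) \<Rightarrow> (nat \<Rightarrow> nat \<Rightarrow> complex)
    \<Rightarrow> ((nat \<times> nat \<Rightarrow> complex) \<Rightarrow> (nat \<Rightarrow> complex) \<Rightarrow> complex)
    \<Rightarrow> ((nat \<times> nat \<Rightarrow> complex) \<Rightarrow> (nat \<Rightarrow> complex) \<Rightarrow> complex)" where
  "actV n A B F = (\<lambda>y u. F (\<lambda>(k,l). \<Sum>i<2. \<Sum>j<2*n. A i k * y (i,j) * B j l)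
                          (\<lambda>k. \<Sum>i<2. A i k * u i))"

definition actT :: "nat \<Rightarrow> (nat \<Rightarrow> nat \<Rightarrow> complex) \<Rightarrow> (nat \<Rightarrow> nat \<Rightarrow> complex)
    \<Rightarrow> ((nat \<Rightarrow> complex) \<Rightarrow> (nat \<Rightarrow> complex) \<Rightarrow> complex)
    \<Rightarrow> ((nat \<Rightarrow> complex) \<Rightarrow> (nat \<Rightarrow> complex) \<Rightarrow> complex)" where
  "actT n A B G = (\<lambda>u e. G (\<lambda>k. \<Sum>i<2. A i k * u i) (\<lambda>l. \<Sum>j<2*n. B j l * e j))"

end

(*
  An element F of the l-th prolongation is a polynomial F(y, u) in y \<in> H \<otimes> E and u \<in> H
  whose derivative in y along every direction u \<otimes> w vanishes (this is the kernel condition),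
  so F(y + u \<otimes> w, u) = F(y, u). Hence F depends on y only through the symplectic contraction
  c(y, u) = u\<^sub>0 y\<^sub>1 - u\<^sub>1 y\<^sub>0 \<in> E, i.e. F(y, u) = G(u, c(y, u)), and G is unique because
  c(-, u) is onto E whenever u\<^sub>0 \<noteq> 0. Evaluating at y = e\<^sub>1 \<otimes> e gives
  F(e\<^sub>1 \<otimes> e, u) = u\<^sub>0\<^bsup>l+1\<^esup> G(u, e), and translation invariance shows that the left side
  is divisible by u\<^sub>0\<^bsup>l+1\<^esup>; so G is a polynomial of bidegree (2r - l - 1, l + 1), and G = 0
  when 2r \<le> l. Conversely every such G yields an element of the prolongation, and G \<mapsto> F
  commutes with Sp(1) \<times> Sp(n) because c is invariant under SL(2) = Sp(1, \<complex>).
*)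
theory Submission
  imports Defs "HOL-Computational_Algebra.Polynomial"
begin

section \<open>Bihomogeneous polynomials\<close>

definition mon :: "'x set \<Rightarrow> ('x \<Rightarrow> nat) \<Rightarrow> ('x \<Rightarrow> complex) \<Rightarrow> complex" where
  "mon X \<alpha> v = (\<Prod>x\<in>X. v x ^ \<alpha> x)"

lemma bihom_iff_mon: "bihom X m Y k F \<longleftrightarrow> (\<exists>c. \<forall>v w. F v w =
   (\<Sum>\<alpha>\<in>mexp X m. \<Sum>\<beta>\<in>mexp Y k. c \<alpha> \<beta> * mon X \<alpha> v * mon Y \<beta> w))"
  by (simp add: bihom_def mon_def)

lemma finite_mexp:
  assumes "finite X"
  shows "finite (mexp X m)"
proof -
  have "mexp X m \<subseteq> {f. \<forall>x. (x \<in> X \<longrightarrow> f x \<in> {..m}) \<and> (x \<notin> X \<longrightarrow> f x = 0)}"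
  proof
    fix f assume f: "f \<in> mexp X m"
    have "f x \<le> m" if "x \<in> X" for x
      using member_le_sum[OF that _ assms, of f] f by (simp add: mexp_def)
    with f show "f \<in> {f. \<forall>x. (x \<in> X \<longrightarrow> f x \<in> {..m}) \<and> (x \<notin> X \<longrightarrow> f x = 0)}"
      by (auto simp: mexp_def)
  qed
  then show ?thesis
    by (rule finite_subset) (intro finite_set_of_finite_funs assms, simp)
qed

lemma mexp_0: "finite X \<Longrightarrow> mexp X 0 = {\<lambda>_. 0}"
  by (auto simp: mexp_def fun_eq_iff)

lemma mexp_add: "a \<in> mexp X m \<Longrightarrow> b \<in> mexp X k \<Longrightarrow> (\<lambda>x. a x + b x) \<in> mexp X (m + k)"
  by (simp add: mexp_def sum.distrib)

lemma mon_zero [simp]: "mon X (\<lambda>_. 0) v = 1"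
  by (simp add: mon_def)

lemma mon_add: "mon X (\<lambda>x. a x + b x) v = mon X a v * mon X b v"
  by (simp add: mon_def power_add prod.distrib)

lemma mon_scale: "mon X \<alpha> (\<lambda>x. s * v x) = s ^ (\<Sum>x\<in>X. \<alpha> x) * mon X \<alpha> v"
  by (simp add: mon_def power_mult_distrib prod.distrib power_sum)

lemma bihom_zero: "bihom X m Y k (\<lambda>_ _. 0)"
  unfolding bihom_iff_mon by (rule exI[of _ "\<lambda>_ _. 0"]) simp

lemma bihom_one: "finite X \<Longrightarrow> finite Y \<Longrightarrow> bihom X 0 Y 0 (\<lambda>_ _. 1)"
  unfolding bihom_iff_mon by (rule exI[of _ "\<lambda>_ _. 1"]) (simp add: mexp_0)

lemma bihom_scale:
  assumes "bihom X m Y k F"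
  shows "bihom X m Y k (\<lambda>v w. a * F v w)"
proof -
  obtain c where c: "\<And>v w. F v w = (\<Sum>\<alpha>\<in>mexp X m. \<Sum>\<beta>\<in>mexp Y k. c \<alpha> \<beta> * mon X \<alpha> v * mon Y \<beta> w)"
    using assms unfolding bihom_iff_mon by blast
  show ?thesis unfolding bihom_iff_mon
    by (rule exI[of _ "\<lambda>\<alpha> \<beta>. a * c \<alpha> \<beta>"]) (simp add: c sum_distrib_left mult.assoc)
qed

lemma bihom_sum:
  assumes "finite I" "\<And>i. i \<in> I \<Longrightarrow> bihom X m Y k (F i)"
  shows "bihom X m Y k (\<lambda>v w. \<Sum>i\<in>I. F i v w)"
proof -
  have "\<forall>i\<in>I. \<exists>c. \<forall>v w. F i v w = (\<Sum>\<alpha>\<in>mexp X m. \<Sum>\<beta>\<in>mexp Y k. c \<alpha> \<beta> * mon X \<alpha> v * mon Y \<beta> w)"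
    using assms(2) unfolding bihom_iff_mon by blast
  then obtain c where c: "\<forall>i\<in>I. \<forall>v w.
      F i v w = (\<Sum>\<alpha>\<in>mexp X m. \<Sum>\<beta>\<in>mexp Y k. c i \<alpha> \<beta> * mon X \<alpha> v * mon Y \<beta> w)"
    by (rule bchoice[elim_format]) blast
  have "(\<Sum>i\<in>I. F i v w) =
      (\<Sum>\<alpha>\<in>mexp X m. \<Sum>\<beta>\<in>mexp Y k. (\<Sum>i\<in>I. c i \<alpha> \<beta>) * mon X \<alpha> v * mon Y \<beta> w)" for v w
  proof -
    have "(\<Sum>i\<in>I. F i v w) =
        (\<Sum>i\<in>I. \<Sum>\<alpha>\<in>mexp X m. \<Sum>\<beta>\<in>mexp Y k. c i \<alpha> \<beta> * mon X \<alpha> v * mon Y \<beta> w)"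
      using c by (intro sum.cong) blast+
    also have "\<dots> = (\<Sum>\<alpha>\<in>mexp X m. \<Sum>\<beta>\<in>mexp Y k. \<Sum>i\<in>I. c i \<alpha> \<beta> * mon X \<alpha> v * mon Y \<beta> w)"
      by (subst sum.swap, rule sum.cong[OF refl], rule sum.swap)
    finally show ?thesis
      by (simp add: sum_distrib_right)
  qed
  then show ?thesis
    unfolding bihom_iff_mon by (intro exI[of _ "\<lambda>\<alpha> \<beta>. \<Sum>i\<in>I. c i \<alpha> \<beta>"]) simp
qed

lemma bihom_add:
  "bihom X m Y k F \<Longrightarrow> bihom X m Y k G \<Longrightarrow> bihom X m Y k (\<lambda>v w. F v w + G v w)"
  using bihom_sum[of "{True, False}" X m Y k "\<lambda>b. if b then F else G"] by simp

lemma bihom_swap: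
  assumes "bihom X m Y k F"
  shows "bihom Y k X m (\<lambda>w v. F v w)"
proof -
  obtain c where c: "\<And>v w. F v w = (\<Sum>\<alpha>\<in>mexp X m. \<Sum>\<beta>\<in>mexp Y k. c \<alpha> \<beta> * mon X \<alpha> v * mon Y \<beta> w)"
    using assms unfolding bihom_iff_mon by blast
  have "F v w = (\<Sum>\<beta>\<in>mexp Y k. \<Sum>\<alpha>\<in>mexp X m. c \<alpha> \<beta> * mon Y \<beta> w * mon X \<alpha> v)" for v w
    unfolding c by (subst sum.swap) (simp add: mult_ac)
  then show ?thesis
    unfolding bihom_iff_mon by (intro exI[of _ "\<lambda>\<beta> \<alpha>. c \<alpha> \<beta>"]) simp
qed

lemma bihom_mon:
  assumes "finite X" "finite Y" "a \<in> mexp X m" "b \<in> mexp Y k"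
  shows "bihom X m Y k (\<lambda>v w. mon X a v * mon Y b w)"
proof -
  have "(\<Sum>\<alpha>\<in>mexp X m. \<Sum>\<beta>\<in>mexp Y k.
      (if (\<alpha>, \<beta>) = (a, b) then 1 else 0) * mon X \<alpha> v * mon Y \<beta> w)
    = (\<Sum>p\<in>mexp X m \<times> mexp Y k. if p = (a, b) then mon X a v * mon Y b w else 0)" for v w
    unfolding sum.cartesian_product by (intro sum.cong) (auto split: if_splits)
  also have "\<dots> v w = mon X a v * mon Y b w" for v w
    using assms by (simp add: finite_mexp)
  finally show ?thesis
    unfolding bihom_iff_mon by (intro exI[of _ "\<lambda>\<alpha> \<beta>. if (\<alpha>, \<beta>) = (a, b) then 1 else 0"]) simp
qed

lemma bihom_var_left:
  assumes "finite X" "finite Y" "x \<in> X"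
  shows "bihom X 1 Y 0 (\<lambda>v w. v x)"
proof -
  have \<delta>: "(\<lambda>x'. if x' = x then 1 else 0) \<in> mexp X 1"
    using assms by (simp add: mexp_def)
  have "mon X (\<lambda>x'. if x' = x then 1 else 0) v = v x" for v
    using assms by (simp add: mon_def if_distrib[of "power _"] prod.If_cases Int_absorb1)
  with bihom_mon[OF assms(1,2) \<delta>, of "\<lambda>_. 0" 0] show ?thesis
    by (simp add: mexp_0 assms)
qed

lemma bihom_var_right: "finite X \<Longrightarrow> finite Y \<Longrightarrow> y \<in> Y \<Longrightarrow> bihom X 0 Y 1 (\<lambda>v w. w y)"
  using bihom_swap[OF bihom_var_left, of Y X y] by simp

lemma bihom_mult:
  assumes fin: "finite X" "finite Y"
    and F: "bihom X m1 Y k1 F" and G: "bihom X m2 Y k2 G"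
  shows "bihom X (m1 + m2) Y (k1 + k2) (\<lambda>v w. F v w * G v w)"
proof -
  obtain c1 where c1: "\<And>v w. F v w =
      (\<Sum>\<alpha>\<in>mexp X m1. \<Sum>\<beta>\<in>mexp Y k1. c1 \<alpha> \<beta> * mon X \<alpha> v * mon Y \<beta> w)"
    using F unfolding bihom_iff_mon by blast
  obtain c2 where c2: "\<And>v w. G v w =
      (\<Sum>\<alpha>\<in>mexp X m2. \<Sum>\<beta>\<in>mexp Y k2. c2 \<alpha> \<beta> * mon X \<alpha> v * mon Y \<beta> w)"
    using G unfolding bihom_iff_mon by blast
  have "F v w * G v w = (\<Sum>a1\<in>mexp X m1. \<Sum>b1\<in>mexp Y k1. \<Sum>a2\<in>mexp X m2. \<Sum>b2\<in>mexp Y k2.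
      c1 a1 b1 * c2 a2 b2 * (mon X (\<lambda>x. a1 x + a2 x) v * mon Y (\<lambda>y. b1 y + b2 y) w))" for v w
  proof -
    have "F v w * G v w =
        (\<Sum>a1\<in>mexp X m1. \<Sum>b1\<in>mexp Y k1. (c1 a1 b1 * mon X a1 v * mon Y b1 w) * G v w)"
      unfolding c1[of v w] by (simp only: sum_distrib_right)
    also have "\<dots> = (\<Sum>a1\<in>mexp X m1. \<Sum>b1\<in>mexp Y k1. \<Sum>a2\<in>mexp X m2. \<Sum>b2\<in>mexp Y k2.
        (c1 a1 b1 * mon X a1 v * mon Y b1 w) * (c2 a2 b2 * mon X a2 v * mon Y b2 w))"
      unfolding c2[of v w] by (simp only: sum_distrib_left)
    finally show ?thesis
      by (simp add: mon_add mult_ac)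
  qed
  moreover have "bihom X (m1 + m2) Y (k1 + k2) (\<lambda>v w.
      \<Sum>a1\<in>mexp X m1. \<Sum>b1\<in>mexp Y k1. \<Sum>a2\<in>mexp X m2. \<Sum>b2\<in>mexp Y k2.
      c1 a1 b1 * c2 a2 b2 * (mon X (\<lambda>x. a1 x + a2 x) v * mon Y (\<lambda>y. b1 y + b2 y) w))"
    by (intro bihom_sum bihom_scale bihom_mon mexp_add finite_mexp fin) auto
  ultimately show ?thesis
    by simp
qed

lemma bihom_power:
  assumes "finite X" "finite Y" "bihom X m Y k F"
  shows "bihom X (m * p) Y (k * p) (\<lambda>v w. F v w ^ p)"
proof (induction p)
  case 0
  then show ?case using bihom_one[OF assms(1,2)] by simp
next
  case (Suc p)
  from bihom_mult[OF assms Suc] show ?case by simp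
qed

lemma bihom_prod:
  assumes fin: "finite X" "finite Y" "finite I"
    and F: "\<And>i. i \<in> I \<Longrightarrow> bihom X (m i) Y (k i) (F i)"
  shows "bihom X (\<Sum>i\<in>I. m i) Y (\<Sum>i\<in>I. k i) (\<lambda>v w. \<Prod>i\<in>I. F i v w)"
  using fin(3) F
proof (induction I rule: finite_induct)
  case empty
  then show ?case using bihom_one[OF fin(1,2)] by simp
next
  case (insert i I)
  from bihom_mult[OF fin(1,2) insert.prems[of i] insert.IH] insert show ?case by simp
qed

lemma bihom_subst:
  assumes fin: "finite X" "finite Y" "finite A" "finite B"
    and F: "bihom X m Y k F"
    and \<sigma>: "\<And>x. x \<in> X \<Longrightarrow> bihom A p B q (\<sigma> x)"
    and \<tau>: "\<And>y. y \<in> Y \<Longrightarrow> bihom A p' B q' (\<tau> y)"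
  shows "bihom A (m * p + k * p') B (m * q + k * q') (\<lambda>a b. F (\<lambda>x. \<sigma> x a b) (\<lambda>y. \<tau> y a b))"
proof -
  obtain c where c: "\<And>v w. F v w =
      (\<Sum>\<alpha>\<in>mexp X m. \<Sum>\<beta>\<in>mexp Y k. c \<alpha> \<beta> * mon X \<alpha> v * mon Y \<beta> w)"
    using F unfolding bihom_iff_mon by blast
  have X: "bihom A (m * p) B (m * q) (\<lambda>a b. mon X \<alpha> (\<lambda>x. \<sigma> x a b))" if "\<alpha> \<in> mexp X m" for \<alpha>
  proof -
    have "bihom A (\<Sum>x\<in>X. p * \<alpha> x) B (\<Sum>x\<in>X. q * \<alpha> x) (\<lambda>a b. \<Prod>x\<in>X. \<sigma> x a b ^ \<alpha> x)"
      by (intro bihom_prod fin bihom_power \<sigma>)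
    with that show ?thesis
      by (simp add: mon_def mexp_def sum_distrib_left[symmetric] mult.commute)
  qed
  have Y: "bihom A (k * p') B (k * q') (\<lambda>a b. mon Y \<beta> (\<lambda>y. \<tau> y a b))" if "\<beta> \<in> mexp Y k" for \<beta>
  proof -
    have "bihom A (\<Sum>y\<in>Y. p' * \<beta> y) B (\<Sum>y\<in>Y. q' * \<beta> y) (\<lambda>a b. \<Prod>y\<in>Y. \<tau> y a b ^ \<beta> y)"
      by (intro bihom_prod fin bihom_power \<tau>)
    with that show ?thesis
      by (simp add: mon_def mexp_def sum_distrib_left[symmetric] mult.commute)
  qed
  show ?thesis
    unfolding c mult.assoc
    by (intro bihom_sum bihom_scale finite_mexp fin bihom_mult[OF fin(3,4)] X Y)
qed

lemma bihom_homogeneous_left: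
  assumes "bihom X m Y k F"
  shows "F (\<lambda>x. s * v x) w = s ^ m * F v w"
proof -
  obtain c where c: "\<And>v w. F v w =
      (\<Sum>\<alpha>\<in>mexp X m. \<Sum>\<beta>\<in>mexp Y k. c \<alpha> \<beta> * mon X \<alpha> v * mon Y \<beta> w)"
    using assms unfolding bihom_iff_mon by blast
  show ?thesis
    unfolding c sum_distrib_left
    by (intro sum.cong refl) (simp add: mon_scale mexp_def mult_ac)
qed

lemma bihom_local:
  assumes "bihom X m Y k F" "\<And>x. x \<in> X \<Longrightarrow> v x = v' x" "\<And>y. y \<in> Y \<Longrightarrow> w y = w' y"
  shows "F v w = F v' w'"
proof -
  obtain c where c: "\<And>v w. F v w =
      (\<Sum>\<alpha>\<in>mexp X m. \<Sum>\<beta>\<in>mexp Y k. c \<alpha> \<beta> * mon X \<alpha> v * mon Y \<beta> w)"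
    using assms unfolding bihom_iff_mon by blast
  have "mon X \<alpha> v = mon X \<alpha> v'" "mon Y \<beta> w = mon Y \<beta> w'" for \<alpha> \<beta>
    unfolding mon_def using assms(2,3) by (auto intro: prod.cong)
  then show ?thesis
    by (simp add: c)
qed

lemma bihom_continuous_right:
  assumes "bihom X m Y k F"
  shows "continuous_on UNIV (\<lambda>t. F v (w(y := t)))"
proof -
  obtain c where c: "\<And>v w. F v w =
      (\<Sum>\<alpha>\<in>mexp X m. \<Sum>\<beta>\<in>mexp Y k. c \<alpha> \<beta> * mon X \<alpha> v * mon Y \<beta> w)"
    using assms unfolding bihom_iff_mon by blast
  have upd: "continuous_on UNIV (\<lambda>t. (w(y := t)) y')" for y'
    by (cases "y' = y") auto
  show ?thesis
    unfolding c mon_def by (intro continuous_intros upd)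
qed

lemma bihom_eqI_off_hyperplane:
  assumes F: "bihom X m Y k F" and G: "bihom X m' Y k' G"
    and eq: "\<And>v w. w y \<noteq> 0 \<Longrightarrow> F v w = G v w"
  shows "F = G"
proof (intro ext)
  fix v w
  have "(\<lambda>t. F v (w(y := t))) \<midarrow>0\<rightarrow> F v (w(y := 0))"
    using bihom_continuous_right[OF F] by (simp add: continuous_on_eq_continuous_at isCont_def)
  moreover have "(\<lambda>t. G v (w(y := t))) \<midarrow>0\<rightarrow> G v (w(y := 0))"
    using bihom_continuous_right[OF G] by (simp add: continuous_on_eq_continuous_at isCont_def)
  ultimately have "F v (w(y := 0)) = G v (w(y := 0))"
    using LIM_equal[of 0 "\<lambda>t. F v (w(y := t))" "\<lambda>t. G v (w(y := t))"] eq
    by (auto intro: LIM_unique)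
  with eq show "F v w = G v w"
    by (cases "w y = 0") (auto simp: fun_upd_idem)
qed

definition mon_pderiv :: "'x set \<Rightarrow> ('x \<Rightarrow> nat) \<Rightarrow> 'x \<Rightarrow> ('x \<Rightarrow> complex) \<Rightarrow> complex" where
  "mon_pderiv X \<alpha> x v = of_nat (\<alpha> x) * v x ^ (\<alpha> x - 1) * (\<Prod>x'\<in>X - {x}. v x' ^ \<alpha> x')"

lemma mon_line_has_field_derivative:
  assumes "finite X"
  shows "((\<lambda>t. mon X \<alpha> (\<lambda>x. y x + t * d x)) has_field_derivative
           (\<Sum>x\<in>X. d x * mon_pderiv X \<alpha> x (\<lambda>x. y x + t * d x))) (at t)"
proof -
  let ?f = "\<lambda>i t. (y i + t * d i) ^ \<alpha> i"
  let ?D = "\<lambda>i. of_nat (\<alpha> i) * (y i + t * d i) ^ (\<alpha> i - 1) * d i"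
  have "(?f i has_derivative (*) (?D i)) (at t)" for i
    unfolding has_field_derivative_def[symmetric] by (auto intro!: derivative_eq_intros)
  from has_derivative_prod[of X ?f "\<lambda>i. (*) (?D i)" t UNIV, OF this]
  have "((\<lambda>t. \<Prod>i\<in>X. ?f i t) has_derivative (\<lambda>h. \<Sum>i\<in>X. ?D i * h * (\<Prod>j\<in>X - {i}. ?f j t))) (at t)"
    by simp
  moreover have "(\<lambda>h. \<Sum>i\<in>X. ?D i * h * (\<Prod>j\<in>X - {i}. ?f j t))
      = (*) (\<Sum>x\<in>X. d x * mon_pderiv X \<alpha> x (\<lambda>x. y x + t * d x))"
    by (auto simp: fun_eq_iff mon_pderiv_def sum_distrib_left sum_distrib_right mult_ac intro!: sum.cong)
  ultimately show ?thesis
    unfolding has_field_derivative_def mon_def by simp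
qed

lemma bihom_line_has_field_derivative:
  fixes F :: "(nat \<times> nat \<Rightarrow> complex) \<Rightarrow> (nat \<Rightarrow> complex) \<Rightarrow> complex"
  assumes fin: "finite X" and F: "bihom X m Y k F"
  shows "((\<lambda>t. F (\<lambda>x. y x + t * d x) w) has_field_derivative
           (\<Sum>x\<in>X. d x * dy x F (\<lambda>x. y x + t * d x) w)) (at t)"
proof -
  obtain c where c: "\<And>v w. F v w =
      (\<Sum>\<alpha>\<in>mexp X m. \<Sum>\<beta>\<in>mexp Y k. c \<alpha> \<beta> * mon X \<alpha> v * mon Y \<beta> w)"
    using F unfolding bihom_iff_mon by blast
  define DF where "DF x v w =
      (\<Sum>\<alpha>\<in>mexp X m. \<Sum>\<beta>\<in>mexp Y k. c \<alpha> \<beta> * mon_pderiv X \<alpha> x v * mon Y \<beta> w)" for x v w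
  have line: "((\<lambda>t. F (\<lambda>x. y x + t * d x) w) has_field_derivative
      (\<Sum>x\<in>X. d x * DF x (\<lambda>x. y x + t * d x) w)) (at t)" for y d w t
  proof -
    let ?v = "\<lambda>x. y x + t * d x"
    have "((\<lambda>t. F (\<lambda>x. y x + t * d x) w) has_field_derivative (\<Sum>\<alpha>\<in>mexp X m. \<Sum>\<beta>\<in>mexp Y k.
        c \<alpha> \<beta> * (\<Sum>x\<in>X. d x * mon_pderiv X \<alpha> x ?v) * mon Y \<beta> w)) (at t)"
      unfolding c by (intro DERIV_sum DERIV_cmult DERIV_cmult_right mon_line_has_field_derivative fin)
    also have "(\<Sum>\<alpha>\<in>mexp X m. \<Sum>\<beta>\<in>mexp Y k. c \<alpha> \<beta> * (\<Sum>x\<in>X. d x * mon_pderiv X \<alpha> x ?v) * mon Y \<beta> w)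
        = (\<Sum>\<alpha>\<in>mexp X m. \<Sum>x\<in>X. \<Sum>\<beta>\<in>mexp Y k. d x * (c \<alpha> \<beta> * mon_pderiv X \<alpha> x ?v * mon Y \<beta> w))"
      by (subst sum.swap) (simp add: sum_distrib_left sum_distrib_right mult_ac)
    also have "\<dots> = (\<Sum>x\<in>X. d x * DF x ?v w)"
      by (subst sum.swap) (simp add: DF_def sum_distrib_left)
    finally show ?thesis .
  qed
  have "dy x F v w = DF x v w" if "x \<in> X" for x v w
  proof -
    let ?\<delta> = "\<lambda>z. of_bool (z = x) :: complex"
    have upd: "(\<lambda>z. (v(x := 0)) z + t * ?\<delta> z) = v(x := t)" for t
      by (auto simp: fun_eq_iff)
    have "((\<lambda>t. F (v(x := t)) w) has_field_derivative DF x v w) (at (v x))"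
      using line[of "v(x := 0)" ?\<delta> w "v x", unfolded upd] that fin by (simp add: Int_absorb1)
    then show ?thesis
      unfolding dy_def by (rule DERIV_imp_deriv)
  qed
  with line[of y d w t] fin show ?thesis
    by (simp cong: sum.cong)
qed

definition hvec :: "'a::zero \<Rightarrow> 'a \<Rightarrow> nat \<Rightarrow> 'a" where
  "hvec a b = (\<lambda>i. if i = 0 then a else if i = 1 then b else 0)"

lemma finite_Hset [simp]: "finite Hset"
  by (simp add: Hset_def)

lemma finite_Eset [simp]: "finite (Eset n)"
  by (simp add: Eset_def)

lemma finite_Vset [simp]: "finite (Vset n)"
  by (simp add: Vset_def)

lemma sum_lessThan_2: "(\<Sum>i<2. f i) = f 0 + f (1::nat)"
  by (simp add: numeral_2_eq_2)

lemma hvec_in_mexp_Hset: "hvec a b \<in> mexp Hset (a + b)"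
  by (simp add: mexp_def Hset_def hvec_def sum_lessThan_2)

lemma mexp_Hset: "mexp Hset N = (\<lambda>k. hvec k (N - k)) ` {..N}"
proof
  show "mexp Hset N \<subseteq> (\<lambda>k. hvec k (N - k)) ` {..N}"
  proof
    fix \<alpha> assume "\<alpha> \<in> mexp Hset N"
    then have "\<alpha> = hvec (\<alpha> 0) (N - \<alpha> 0)" "\<alpha> 0 \<le> N"
      by (auto simp: mexp_def Hset_def hvec_def fun_eq_iff sum_lessThan_2)
    then show "\<alpha> \<in> (\<lambda>k. hvec k (N - k)) ` {..N}"
      by blast
  qed
  show "(\<lambda>k. hvec k (N - k)) ` {..N} \<subseteq> mexp Hset N"
  proof (rule image_subsetI)
    fix k assume "k \<in> {..N}"
    then show "hvec k (N - k) \<in> mexp Hset N"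
      using hvec_in_mexp_Hset[of k "N - k"] by simp
  qed
qed

lemma mon_Hset_hvec: "mon Hset (hvec a b) u = u 0 ^ a * u 1 ^ b"
  by (simp add: mon_def Hset_def hvec_def numeral_2_eq_2 lessThan_Suc)

lemma bihom_Hset_monomial: "finite Y \<Longrightarrow> bihom Hset (a + b) Y 0 (\<lambda>u e. u 0 ^ a * u 1 ^ b)"
  using bihom_mon[OF finite_Hset _ hvec_in_mexp_Hset, of Y "\<lambda>_. 0" 0]
  by (simp add: mexp_0 mon_Hset_hvec)

lemma bihom_Hset_expansion:
  assumes Y: "finite Y" and G: "bihom Hset N Y M G"
  obtains q where "\<And>k. bihom Hset 0 Y M (\<lambda>_ e. q k e)"
    and "\<And>u e. G u e = (\<Sum>k\<le>N. q k e * u 0 ^ k * u 1 ^ (N - k))"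
proof -
  obtain c where c: "\<And>v w. G v w =
      (\<Sum>\<alpha>\<in>mexp Hset N. \<Sum>\<beta>\<in>mexp Y M. c \<alpha> \<beta> * mon Hset \<alpha> v * mon Y \<beta> w)"
    using G unfolding bihom_iff_mon by blast
  define q where "q k e = (\<Sum>\<beta>\<in>mexp Y M. c (hvec k (N - k)) \<beta> * mon Y \<beta> e)" for k e
  have inj: "inj_on (\<lambda>k. hvec k (N - k)) {..N}"
    by (rule inj_onI) (drule fun_cong[of _ _ 0], simp add: hvec_def)
  have expansion: "G u e = (\<Sum>k\<le>N. q k e * u 0 ^ k * u 1 ^ (N - k))" for u e
    by (simp add: c mexp_Hset sum.reindex[OF inj] mon_Hset_hvec q_def
        sum_distrib_left sum_distrib_right mult_ac)
  have "bihom Hset 0 Y M (\<lambda>_ e. q k e)" for k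
  proof -
    have "bihom Hset 0 Y M (\<lambda>_ e. mon Y \<beta> e)" if "\<beta> \<in> mexp Y M" for \<beta>
      using bihom_mon[OF finite_Hset Y _ that, of "\<lambda>_. 0" 0] by (simp add: mexp_0)
    then show ?thesis
      unfolding q_def by (intro bihom_sum bihom_scale finite_mexp Y)
  qed
  then show ?thesis
    using expansion by (rule that)
qed

lemma polyfun_coeff_zero_below_factor:
  fixes a b :: "nat \<Rightarrow> 'a::{comm_ring_1,ring_no_zero_divisors,ring_char_0}"
  assumes eq: "\<And>s. (\<Sum>i\<le>N. a i * s ^ i) = s ^ L * (\<Sum>i\<le>N. b i * s ^ i)"
    and "k \<le> N" "k < L"
  shows "a k = 0"
proof -
  have "poly (\<Sum>i\<le>N. monom (a i) i) = poly (monom 1 L * (\<Sum>i\<le>N. monom (b i) i))"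
    by (simp add: fun_eq_iff poly_sum poly_monom eq)
  then have "(\<Sum>i\<le>N. monom (a i) i) = monom 1 L * (\<Sum>i\<le>N. monom (b i) i)"
    by (rule poly_eq_poly_eq_iff[THEN iffD1])
  then have "coeff (\<Sum>i\<le>N. monom (a i) i) k = coeff (monom 1 L * (\<Sum>i\<le>N. monom (b i) i)) k"
    by simp
  then show ?thesis
    using assms(2,3) by (simp add: coeff_sum_monom coeff_monom_mult)
qed

lemma Hset_expansion_factor_power:
  assumes Y: "finite Y" and q: "\<And>k. bihom Hset 0 Y M (\<lambda>_ e. q k e)"
    and low: "\<And>k e. k \<le> N \<Longrightarrow> k < L \<Longrightarrow> q k e = 0"
  obtains P where "if L \<le> N then bihom Hset (N - L) Y M P else P = (\<lambda>_ _. 0)"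
    and "\<And>u e. (\<Sum>k\<le>N. q k e * u 0 ^ k * u 1 ^ (N - k)) = u 0 ^ L * P u e"
proof -
  define P where "P = (\<lambda>(u :: nat \<Rightarrow> complex) e. \<Sum>k\<in>{L..N}. q k e * (u 0 ^ (k - L) * u 1 ^ (N - k)))"
  have factor: "(\<Sum>k\<le>N. q k e * u 0 ^ k * u 1 ^ (N - k)) = u 0 ^ L * P u e" for u e
  proof -
    have "(\<Sum>k\<le>N. q k e * u 0 ^ k * u 1 ^ (N - k)) = (\<Sum>k\<in>{L..N}. q k e * u 0 ^ k * u 1 ^ (N - k))"
      using low by (intro sum.mono_neutral_right) auto
    also have "\<dots> = u 0 ^ L * P u e"
      unfolding P_def sum_distrib_left
    proof (intro sum.cong refl)
      fix k assume "k \<in> {L..N}"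
      then obtain j where "k = L + j"
        using le_Suc_ex by auto
      then show "q k e * u 0 ^ k * u 1 ^ (N - k) = u 0 ^ L * (q k e * (u 0 ^ (k - L) * u 1 ^ (N - k)))"
        by (simp add: power_add mult_ac)
    qed
    finally show ?thesis .
  qed
  have "if L \<le> N then bihom Hset (N - L) Y M P else P = (\<lambda>_ _. 0)"
  proof (cases "L \<le> N")
    case True
    have "bihom Hset (N - L) Y M (\<lambda>u e. q k e * (u 0 ^ (k - L) * u 1 ^ (N - k)))"
      if "k \<in> {L..N}" for k
    proof -
      from that have "k - L + (N - k) = N - L"
        by auto
      with bihom_mult[OF finite_Hset Y q bihom_Hset_monomial[OF Y, of "k - L" "N - k"]] show ?thesis
        by simp
    qed
    then have "bihom Hset (N - L) Y M P"
      unfolding P_def by (rule bihom_sum[OF finite_atLeastAtMost])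
    with True show ?thesis
      by simp
  qed (simp add: P_def)
  then show ?thesis
    using factor by (rule that)
qed

lemma bihom_Hset_factor_power:
  assumes Y: "finite Y" and G: "bihom Hset N Y M G" and R: "bihom Hset N Y M R"
    and GR: "\<And>s e. G (hvec s 1) e = s ^ L * R (hvec s 1) e"
  obtains P where "if L \<le> N then bihom Hset (N - L) Y M P else P = (\<lambda>_ _. 0)"
    and "\<And>u e. G u e = u 0 ^ L * P u e"
proof -
  obtain q where q: "\<And>k. bihom Hset 0 Y M (\<lambda>_ e. q k e)"
    and Gq: "\<And>u e. G u e = (\<Sum>k\<le>N. q k e * u 0 ^ k * u 1 ^ (N - k))"
    using bihom_Hset_expansion[OF Y G] by blast
  obtain p where "\<And>k. bihom Hset 0 Y M (\<lambda>_ e. p k e)"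
    and Rp: "\<And>u e. R u e = (\<Sum>k\<le>N. p k e * u 0 ^ k * u 1 ^ (N - k))"
    using bihom_Hset_expansion[OF Y R] by blast
  have low: "q k e = 0" if "k \<le> N" "k < L" for k e
  proof (rule polyfun_coeff_zero_below_factor[OF _ that])
    show "(\<Sum>i\<le>N. q i e * s ^ i) = s ^ L * (\<Sum>i\<le>N. p i e * s ^ i)" for s
      using GR[of s e] by (simp add: Gq Rp hvec_def)
  qed
  show ?thesis
  proof (rule Hset_expansion_factor_power[OF Y q low])
    fix P assume "if L \<le> N then bihom Hset (N - L) Y M P else P = (\<lambda>_ _. 0)"
      and "\<And>u e. (\<Sum>k\<le>N. q k e * u 0 ^ k * u 1 ^ (N - k)) = u 0 ^ L * P u e"
    then show thesis
      unfolding Gq[symmetric] by (rule that)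
  qed
qed

section \<open>The prolongation as a space of translation-invariant polynomials\<close>

definition tensor :: "(nat \<Rightarrow> complex) \<Rightarrow> (nat \<Rightarrow> complex) \<Rightarrow> nat \<times> nat \<Rightarrow> complex" where
  "tensor h e = (\<lambda>(i, j). h i * e j)"

definition sp_contract :: "(nat \<times> nat \<Rightarrow> complex) \<Rightarrow> (nat \<Rightarrow> complex) \<Rightarrow> nat \<Rightarrow> complex" where
  "sp_contract y u = (\<lambda>j. u 0 * y (1, j) - u 1 * y (0, j))"

definition embed :: "((nat \<Rightarrow> complex) \<Rightarrow> (nat \<Rightarrow> complex) \<Rightarrow> complex)
    \<Rightarrow> (nat \<times> nat \<Rightarrow> complex) \<Rightarrow> (nat \<Rightarrow> complex) \<Rightarrow> complex" where
  "embed G = (\<lambda>y u. G u (sp_contract y u))"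

lemma sp_contract_tensor: "sp_contract (tensor h e) u = (\<lambda>j. (u 0 * h 1 - u 1 * h 0) * e j)"
  by (simp add: sp_contract_def tensor_def fun_eq_iff algebra_simps)

lemma sp_contract_translate: "sp_contract (\<lambda>p. y p + tensor u w p) u = sp_contract y u"
  by (simp add: sp_contract_def tensor_def fun_eq_iff algebra_simps)

lemma sum_Vset_tensor:
  "(\<Sum>p\<in>Vset n. tensor u w p * D p) = (\<Sum>j<2 * n. w j * (\<Sum>i<2. u i * D (i, j)))"
proof -
  have "(\<Sum>p\<in>Vset n. tensor u w p * D p) = (\<Sum>i<2. \<Sum>j<2 * n. w j * (u i * D (i, j)))"
    unfolding Vset_def Hset_def Eset_def sum.cartesian_product
    by (intro sum.cong refl) (auto simp: tensor_def mult_ac)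
  then show ?thesis
    by (subst (asm) sum.swap) (simp add: sum_distrib_left)
qed

lemma prolong_iff_translation_invariant:
  "F \<in> prolong r n l \<longleftrightarrow> bihom (Vset n) (l + 1) Hset (2 * r) F
     \<and> (\<forall>y u w. F (\<lambda>p. y p + tensor u w p) u = F y u)"
  unfolding prolong_def mem_Collect_eq
proof (rule conj_cong[OF refl])
  assume B: "bihom (Vset n) (l + 1) Hset (2 * r) F"
  have line: "((\<lambda>t. F (\<lambda>p. y p + t * tensor u w p) u) has_field_derivative
      (\<Sum>j<2 * n. w j * (\<Sum>i<2. u i * dy (i, j) F (\<lambda>p. y p + t * tensor u w p) u))) (at t)"
    for y u w t
    using bihom_line_has_field_derivative[OF finite_Vset B, of y "tensor u w" u t]
    unfolding sum_Vset_tensor .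
  show "(\<forall>j<2 * n. \<forall>y u. (\<Sum>i<2. u i * dy (i, j) F y u) = 0)
      \<longleftrightarrow> (\<forall>y u w. F (\<lambda>p. y p + tensor u w p) u = F y u)"
  proof (intro iffI allI impI)
    fix y u w
    assume "\<forall>j<2 * n. \<forall>y u. (\<Sum>i<2. u i * dy (i, j) F y u) = 0"
    then have "((\<lambda>t. F (\<lambda>p. y p + t * tensor u w p) u) has_field_derivative 0) (at t within UNIV)"
      if "t \<in> UNIV" for t
      using line[of y u w t] by simp
    from has_field_derivative_zero_constant[OF convex_UNIV this]
    obtain c where "\<forall>t\<in>UNIV. F (\<lambda>p. y p + t * tensor u w p) u = c"
      by blast
    from this[rule_format, of 1] this[rule_format, of 0]
    show "F (\<lambda>p. y p + tensor u w p) u = F y u"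
      by simp
  next
    fix j y u
    assume inv: "\<forall>y u w. F (\<lambda>p. y p + tensor u w p) u = F y u" and j: "j < 2 * n"
    let ?\<delta> = "\<lambda>j'. of_bool (j' = j) :: complex"
    have "F (\<lambda>p. y p + t * tensor u ?\<delta> p) u = F y u" for t
      using inv[rule_format, of y u "\<lambda>j'. t * ?\<delta> j'"] by (simp add: tensor_def case_prod_beta mult_ac)
    then have const: "((\<lambda>t. F (\<lambda>p. y p + t * tensor u ?\<delta> p) u) has_field_derivative 0) (at 0)"
      by simp
    have "((\<lambda>t. F (\<lambda>p. y p + t * tensor u ?\<delta> p) u) has_field_derivative
        (\<Sum>i<2. u i * dy (i, j) F y u)) (at 0)"
      using line[of y u ?\<delta> 0] j by (simp add: Int_absorb1)
    then show "(\<Sum>i<2. u i * dy (i, j) F y u) = 0"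
      using const by (rule DERIV_unique)
  qed
qed

lemma target_bihom: "G \<in> target r n l \<Longrightarrow> bihom Hset (2 * r - l - 1) (Eset n) (l + 1) G"
  by (auto simp: target_def bihom_zero split: if_splits)

lemma target_zero: "G \<in> target r n l \<Longrightarrow> 2 * r < l + 1 \<Longrightarrow> G = (\<lambda>_ _. 0)"
  by (simp add: target_def)

lemma target_lincomb:
  "G \<in> target r n l \<Longrightarrow> G' \<in> target r n l \<Longrightarrow> (\<lambda>u e. a * G u e + b * G' u e) \<in> target r n l"
  by (auto simp: target_def intro!: bihom_add bihom_scale split: if_splits)

lemma bihom_tensor_coord:
  assumes "p \<in> Vset n"
  shows "bihom Hset 0 (Eset n) 1 (\<lambda>u e. tensor h e p)"
proof -
  obtain i j where "p = (i, j)" and j: "j \<in> Eset n"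
    using assms by (auto simp: Vset_def)
  then show ?thesis
    using bihom_scale[OF bihom_var_right[OF finite_Hset finite_Eset j], of "h i"]
    by (simp add: tensor_def)
qed

lemma bihom_restrict_to_tensors:
  assumes "bihom (Vset n) m Hset k F"
  shows "bihom Hset k (Eset n) m (\<lambda>u e. F (tensor h e) u)"
  using bihom_subst[OF finite_Vset finite_Hset finite_Hset finite_Eset assms
      bihom_tensor_coord bihom_var_left[OF finite_Hset finite_Eset]]
  by simp

lemma embed_in_prolong:
  assumes G: "G \<in> target r n l"
  shows "embed G \<in> prolong r n l"
proof -
  have "bihom (Vset n) (l + 1) Hset (2 * r) (embed G)"
  proof (cases "l + 1 \<le> 2 * r")
    case True
    have u: "bihom (Vset n) 0 Hset 1 (\<lambda>y u. u i)" if "i \<in> Hset" for i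
      using that by (intro bihom_var_right) auto
    have y: "bihom (Vset n) 1 Hset 0 (\<lambda>y u. y (i, j))" if "i < 2" "j \<in> Eset n" for i j
      using that by (intro bihom_var_left) (auto simp: Vset_def Hset_def)
    have "bihom (Vset n) (0 + 1) Hset (1 + 0) (\<lambda>y u. u i * y (i', j))"
      if "i < 2" "i' < 2" "j \<in> Eset n" for i i' j
      using that by (intro bihom_mult u y finite_Vset finite_Hset) (auto simp: Hset_def)
    then have contr: "bihom (Vset n) 1 Hset 1 (\<lambda>y u. sp_contract y u j)" if "j \<in> Eset n" for j
      using bihom_add[OF _ bihom_scale, of "Vset n" 1 Hset 1 "\<lambda>y u. u 0 * y (1, j)" "\<lambda>y u. u 1 * y (0, j)" "-1"] that
      by (simp add: sp_contract_def)
    have "bihom (Vset n) ((2 * r - l - 1) * 0 + (l + 1) * 1) Hset ((2 * r - l - 1) * 1 + (l + 1) * 1)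
        (\<lambda>y u. G (\<lambda>i. u i) (\<lambda>j. sp_contract y u j))"
      by (rule bihom_subst[OF finite_Hset finite_Eset finite_Vset finite_Hset target_bihom[OF G] u contr])
    with True show ?thesis
      by (simp add: embed_def)
  next
    case False
    then show ?thesis
      using target_zero[OF G] by (simp add: embed_def bihom_zero)
  qed
  then show ?thesis
    by (simp add: prolong_iff_translation_invariant embed_def sp_contract_translate)
qed

lemma embed_tensor: "embed G (tensor (hvec 0 1) e) u = G u (\<lambda>j. u 0 * e j)"
  by (simp add: embed_def sp_contract_tensor hvec_def)

lemma inj_on_embed: "inj_on embed (target r n l)"
proof (rule inj_onI)
  fix G G' assume G: "G \<in> target r n l" and G': "G' \<in> target r n l" and eq: "embed G = embed G'"
  have swapped: "(\<lambda>e u. G u e) = (\<lambda>e u. G' u e)"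
  proof (rule bihom_eqI_off_hyperplane[where y = 0])
    show "bihom (Eset n) (l + 1) Hset (2 * r - l - 1) (\<lambda>e u. G u e)"
      "bihom (Eset n) (l + 1) Hset (2 * r - l - 1) (\<lambda>e u. G' u e)"
      using bihom_swap target_bihom G G' by blast+
    show "G u e = G' u e" if "u 0 \<noteq> 0" for e u
      using embed_tensor[of G "\<lambda>j. e j / u 0" u] embed_tensor[of G' "\<lambda>j. e j / u 0" u] eq that
      by simp
  qed
  show "G = G'"
  proof (intro ext)
    show "G u e = G' u e" for u e
      using fun_cong[OF fun_cong[OF swapped, of e], of u] by simp
  qed
qed

lemma prolong_tensor_factor:
  assumes F: "F \<in> prolong r n l"
  obtains P where "P \<in> target r n l" and "\<And>u e. F (tensor (hvec 0 1) e) u = u 0 ^ (l + 1) * P u e"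
proof -
  have B: "bihom (Vset n) (l + 1) Hset (2 * r) F"
    and inv: "\<And>y u w. F (\<lambda>p. y p + tensor u w p) u = F y u"
    using F by (auto simp: prolong_iff_translation_invariant)
  define Q where "Q = (\<lambda>u e. F (tensor (hvec 0 1) e) u)"
  define R where "R = (\<lambda>u e. (-1) ^ (l + 1) * F (tensor (hvec 1 0) e) u)"
  have Q_R: "Q (hvec s 1) e = s ^ (l + 1) * R (hvec s 1) e" for s e
  proof -
    (* translating by (s, 1) \<otimes> e moves e\<^sub>1 \<otimes> e to -s e\<^sub>0 \<otimes> e *)
    have "tensor (hvec 0 1) e = (\<lambda>p. tensor (hvec (- s) 0) e p + tensor (hvec s 1) e p)"
      by (auto simp: tensor_def hvec_def fun_eq_iff)
    then have "Q (hvec s 1) e = F (tensor (hvec (- s) 0) e) (hvec s 1)"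
      by (simp add: Q_def inv)
    also have "tensor (hvec (- s) 0) e = (\<lambda>p. (- s) * tensor (hvec 1 0) e p)"
      by (auto simp: tensor_def hvec_def fun_eq_iff)
    also have "F \<dots> (hvec s 1) = (- s) ^ (l + 1) * F (tensor (hvec 1 0) e) (hvec s 1)"
      by (rule bihom_homogeneous_left[OF B])
    finally show ?thesis
      by (simp add: R_def power_minus[of s])
  qed
  have QB: "bihom Hset (2 * r) (Eset n) (l + 1) Q"
    unfolding Q_def by (rule bihom_restrict_to_tensors[OF B])
  have RB: "bihom Hset (2 * r) (Eset n) (l + 1) R"
    unfolding R_def by (rule bihom_scale[OF bihom_restrict_to_tensors[OF B]])
  obtain P where P: "if l + 1 \<le> 2 * r then bihom Hset (2 * r - (l + 1)) (Eset n) (l + 1) P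
      else P = (\<lambda>_ _. 0)"
    and QP: "\<And>u e. Q u e = u 0 ^ (l + 1) * P u e"
    using bihom_Hset_factor_power[OF finite_Eset QB RB Q_R] by blast
  from P have "P \<in> target r n l"
    by (auto simp: target_def split: if_splits)
  then show ?thesis
    using QP unfolding Q_def by (rule that)
qed

lemma prolong_via_contraction:
  assumes F: "F \<in> prolong r n l" and u0: "u 0 \<noteq> 0"
  shows "F y u = (1 / u 0) ^ (l + 1) * F (tensor (hvec 0 1) (sp_contract y u)) u"
proof -
  have B: "bihom (Vset n) (l + 1) Hset (2 * r) F"
    and inv: "\<And>y u w. F (\<lambda>p. y p + tensor u w p) u = F y u"
    using F by (auto simp: prolong_iff_translation_invariant)
  have "F y u = F (\<lambda>p. y p + tensor u (\<lambda>j. - y (0, j) / u 0) p) u"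
    by (rule inv[symmetric])
  also have "\<dots> = F (\<lambda>p. (1 / u 0) * tensor (hvec 0 1) (sp_contract y u) p) u"
  proof (rule bihom_local[OF B])
    fix p assume "p \<in> Vset n"
    then obtain i j where "p = (i, j)" "i = 0 \<or> i = 1"
      by (auto simp: Vset_def Hset_def less_2_cases_iff)
    with u0 show "y p + tensor u (\<lambda>j. - y (0, j) / u 0) p
        = 1 / u 0 * tensor (hvec 0 1) (sp_contract y u) p"
      by (auto simp: tensor_def hvec_def sp_contract_def field_simps)
  qed simp
  also have "\<dots> = (1 / u 0) ^ (l + 1) * F (tensor (hvec 0 1) (sp_contract y u)) u"
    by (rule bihom_homogeneous_left[OF B])
  finally show ?thesis .
qed

lemma embed_onto:
  assumes F: "F \<in> prolong r n l"
  obtains G where "G \<in> target r n l" and "embed G = F"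
proof -
  obtain P where P: "P \<in> target r n l"
    and factor: "\<And>u e. F (tensor (hvec 0 1) e) u = u 0 ^ (l + 1) * P u e"
    using prolong_tensor_factor[OF F] by blast
  have "embed P = F"
  proof (rule bihom_eqI_off_hyperplane[where y = 0])
    show "bihom (Vset n) (l + 1) Hset (2 * r) (embed P)"
      using embed_in_prolong[OF P] by (simp add: prolong_def)
    show "bihom (Vset n) (l + 1) Hset (2 * r) F"
      using F by (simp add: prolong_def)
    show "embed P y u = F y u" if "u 0 \<noteq> 0" for y and u :: "nat \<Rightarrow> complex"
      using that by (simp add: prolong_via_contraction[OF F] factor embed_def
          mult.assoc[symmetric] power_mult_distrib[symmetric])
  qed
  with P show ?thesis
    by (rule that)
qed

lemma bij_betw_embed: "bij_betw embed (target r n l) (prolong r n l)"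
proof (rule bij_betw_imageI[OF inj_on_embed])
  show "embed ` target r n l = prolong r n l"
  proof
    show "embed ` target r n l \<subseteq> prolong r n l"
      using embed_in_prolong by blast
    show "prolong r n l \<subseteq> embed ` target r n l"
    proof
      fix F assume "F \<in> prolong r n l"
      then obtain G where "G \<in> target r n l" "embed G = F"
        by (rule embed_onto)
      then show "F \<in> embed ` target r n l"
        by blast
    qed
  qed
qed

section \<open>Equivariance\<close>

lemma Sp_1_det:
  assumes "Sp 1 A"
  shows "A 0 0 * A 1 1 - A 1 0 * A 0 1 = 1"
proof -
  have "(\<Sum>a<2. \<Sum>b<2. A a 0 * omega 1 a b * A b 1) = omega 1 0 1"
    using assms by (simp add: Sp_def)
  then show ?thesis
    by (simp add: sum_lessThan_2 omega_def)
qed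

lemma sp_contract_equivariant:
  assumes det: "A 0 0 * A 1 1 - A 1 0 * A 0 1 = 1"
  shows "sp_contract (\<lambda>(k, l). \<Sum>i<2. \<Sum>j<2 * n. A i k * y (i, j) * B j l) (\<lambda>k. \<Sum>i<2. A i k * u i)
    = (\<lambda>l. \<Sum>j<2 * n. B j l * sp_contract y u j)"
proof
  fix l
  have "sp_contract (\<lambda>(k, l). \<Sum>i<2. \<Sum>j<2 * n. A i k * y (i, j) * B j l) (\<lambda>k. \<Sum>i<2. A i k * u i) l
      = (\<Sum>j<2 * n. (A 0 0 * A 1 1 - A 1 0 * A 0 1) * (B j l * sp_contract y u j))"
    by (simp add: sp_contract_def sum_lessThan_2 sum.distrib sum_distrib_left sum_subtractf algebra_simps)
  with det show "sp_contract (\<lambda>(k, l). \<Sum>i<2. \<Sum>j<2 * n. A i k * y (i, j) * B j l)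
      (\<lambda>k. \<Sum>i<2. A i k * u i) l = (\<Sum>j<2 * n. B j l * sp_contract y u j)"
    by simp
qed

lemma actV_embed:
  assumes "Sp 1 A"
  shows "actV n A B (embed G) = embed (actT n A B G)"
  by (simp add: actV_def actT_def embed_def sp_contract_equivariant[OF Sp_1_det[OF assms]])

lemma actT_in_target:
  assumes G: "G \<in> target r n l"
  shows "actT n A B G \<in> target r n l"
proof (cases "l + 1 \<le> 2 * r")
  case True
  have "bihom Hset 1 (Eset n) 0 (\<lambda>u e. \<Sum>i<2. A i k * u i)" for k
    by (intro bihom_sum bihom_scale bihom_var_left) (auto simp: Hset_def)
  moreover have "bihom Hset 0 (Eset n) 1 (\<lambda>u e. \<Sum>j<2 * n. B j k * e j)" for k
    by (intro bihom_sum bihom_scale bihom_var_right) (auto simp: Eset_def)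
  ultimately have "bihom Hset ((2 * r - l - 1) * 1 + (l + 1) * 0) (Eset n) ((2 * r - l - 1) * 0 + (l + 1) * 1)
      (\<lambda>u e. G (\<lambda>k. \<Sum>i<2. A i k * u i) (\<lambda>k. \<Sum>j<2 * n. B j k * e j))"
    by (intro bihom_subst[OF finite_Hset finite_Eset finite_Hset finite_Eset target_bihom[OF G]])
  with True show ?thesis
    by (simp add: target_def actT_def)
next
  case False
  then show ?thesis
    using target_zero[OF G] by (simp add: target_def actT_def)
qed

definition project :: "nat \<Rightarrow> nat \<Rightarrow> nat \<Rightarrow> ((nat \<times> nat \<Rightarrow> complex) \<Rightarrow> (nat \<Rightarrow> complex) \<Rightarrow> complex)
    \<Rightarrow> (nat \<Rightarrow> complex) \<Rightarrow> (nat \<Rightarrow> complex) \<Rightarrow> complex" where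
  "project r n l = inv_into (target r n l) embed"

lemma project_embed: "G \<in> target r n l \<Longrightarrow> project r n l (embed G) = G"
  using bij_betw_embed by (simp add: project_def bij_betw_def)

lemma project_in_target: "F \<in> prolong r n l \<Longrightarrow> project r n l F \<in> target r n l"
  using bij_betw_embed by (auto simp: project_def bij_betw_def inv_into_into)

lemma embed_project: "F \<in> prolong r n l \<Longrightarrow> embed (project r n l F) = F"
  using bij_betw_embed by (auto simp: project_def bij_betw_def f_inv_into_f)

lemma bij_betw_project: "bij_betw (project r n l) (prolong r n l) (target r n l)"
  unfolding project_def by (rule bij_betw_inv_into[OF bij_betw_embed])

lemma project_lincomb:
  assumes F: "F \<in> prolong r n l" and G: "G \<in> prolong r n l"
  shows "project r n l (\<lambda>y u. a * F y u + b * G y u)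
    = (\<lambda>v e. a * project r n l F v e + b * project r n l G v e)"
proof -
  have "(\<lambda>y u. a * F y u + b * G y u)
      = (\<lambda>y u. a * embed (project r n l F) y u + b * embed (project r n l G) y u)"
    by (simp add: embed_project F G)
  also have "\<dots> = embed (\<lambda>v e. a * project r n l F v e + b * project r n l G v e)"
    by (simp add: embed_def)
  finally show ?thesis
    using project_embed[OF target_lincomb[OF project_in_target[OF F] project_in_target[OF G]]]
    by simp
qed

lemma project_equivariant:
  assumes A: "Sp 1 A" and F: "F \<in> prolong r n l"
  shows "project r n l (actV n A B F) = actT n A B (project r n l F)"
proof -
  have "actV n A B F = embed (actT n A B (project r n l F))"
    using actV_embed[OF A, of n B "project r n l F"] by (simp add: embed_project F)
  then show ?thesis
    using project_embed[OF actT_in_target[OF project_in_target[OF F]]] by simp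
qed

lemma prolong_trivial:
  assumes "2 * r \<le> l"
  shows "prolong r n l = {\<lambda>_ _. 0}"
proof -
  from assms have "target r n l = {\<lambda>_ _. 0}"
    by (auto simp: target_def)
  with bij_betw_embed[of r n l] show ?thesis
    by (simp add: bij_betw_def embed_def)
qed

theorem lemma5p3:
  fixes r n l :: nat
  assumes "n \<ge> 1"
  shows "\<exists>\<Phi>. bij_betw \<Phi> (prolong r n l) (target r n l)
      \<and> (\<forall>F\<in>prolong r n l. \<forall>G\<in>prolong r n l. \<forall>a b.
            \<Phi> (\<lambda>y u. a * F y u + b * G y u) = (\<lambda>v e. a * \<Phi> F v e + b * \<Phi> G v e))
      \<and> (\<forall>A B. Sp 1 A \<longrightarrow> Sp n B \<longrightarrow>
            (\<forall>F\<in>prolong r n l. \<Phi> (actV n A B F) = actT n A B (\<Phi> F)))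
      \<and> (2 * r \<le> l \<longrightarrow> prolong r n l = {\<lambda>_ _. 0})"
  by (intro exI[of _ "project r n l"] conjI allI impI ballI
      bij_betw_project project_lincomb project_equivariant prolong_trivial)

end
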